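(* Let $(\mathbf d_n)_{n\ge1}$ be a family of degree sequences, $\mathbf d_n=(d_{n,1},\ldots,d_{n,n})\in\mathbb N_0^n$ with $\sum_{j=1}^n d_{n,j}=n$, and let $(v_n)_{n\ge1}$ be vertices with $v_n\in[n]$. Assume \[\sigma^2(\mathbf d_n)=o(n),\qquad \sigma^2(\mathbf d_n)=\omega(n^{-1}),\qquad \Delta(\mathbf d_n)=o\big(\sqrt{n\sigma^2(\mathbf d_n)}\big)\] as $n\to\infty$. Then $\mathfrak s_n(v_n)/\sqrt{n/\sigma^2(\mathbf d_n)}$ converges in distribution to the standard Rayleigh distribution, i.e. \[\lim_{n\to\infty}\mathbb P\Big(\mathfrak s_n(v_n)>x\sqrt{n/\sigma^2(\mathbf d_n)}\Big)=e^{-x^2/2}\quad\text{for all }x>0.\]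
   Context: A degree sequence is $\mathbf d_n=(d_{n,1},\ldots,d_{n,n})\in\mathbb N_0^n$ with $\sum_j d_{n,j}=n$. For such a sequence let $\mathfrak F(\mathbf d_n)=\{f:[n]\to[n]: |f^{-1}(\{i\})|=d_{n,i}\ \forall i\in[n]\}$; a random functional graph with degree sequence $\mathbf d_n$ is the graph with edges $\{(v,F(v))\}$ where $F$ is uniform on $\mathfrak F(\mathbf d_n)$. For $f:V\to V$ and $v\in V$, the six-length is $\mathfrak s_f(v)=\min\{k\in\mathbb N: f^{(k)}(v)\in\{f^{(j)}(v):0\le j\le k-1\}\}$ ($f^{(k)}$ the $k$-fold composition, $f^{(0)}=\mathrm{id}$); $\mathfrak s_n(v)$ denotes $\mathfrak s_F(v)$ for $F$ uniform on $\mathfrak F(\mathbf d_n)$. Notation: $\Delta(\mathbf d_n)=\max_j d_{n,j}$, $m_k(\mathbf d_n)=\sum_j d_{n,j}^k$, $\sigma^2(\mathbf d_n)=m_2(\mathbf d_n)/n-1$. $a_n=\omega(b_n)$ means $b_n=o(a_n)$. *)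

theory Defs
  imports "HOL-Probability.Probability" "HOL-Library.Landau_Symbols"
begin

text \<open>A family of degree sequences is given as d :: nat => nat => nat, where
  d n j is the j-th entry of the n-th degree sequence, j in [n] = {1..n}.\<close>

definition is_degree_seq :: "nat \<Rightarrow> (nat \<Rightarrow> nat) \<Rightarrow> bool" where
  "is_degree_seq n dn \<longleftrightarrow> (\<Sum>j=1..n. dn j) = n"

text \<open>The set F(d_n) of maps [n] -> [n] with prescribed in-degrees
  (extensional, so that it is a finite set).\<close>
definition funs_deg :: "nat \<Rightarrow> (nat \<Rightarrow> nat) \<Rightarrow> (nat \<Rightarrow> nat) set" where
  "funs_deg n dn = {f \<in> {1..n} \<rightarrow>\<^sub>E {1..n}.
      \<forall>i\<in>{1..n}. card {v\<in>{1..n}. f v = i} = dn i}"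

definition six_length :: "('a \<Rightarrow> 'a) \<Rightarrow> 'a \<Rightarrow> nat" where
  "six_length f v = (LEAST k. k \<ge> 1 \<and> (f ^^ k) v \<in> {(f ^^ j) v | j. j \<le> k - 1})"

definition Delta :: "nat \<Rightarrow> (nat \<Rightarrow> nat) \<Rightarrow> nat" where
  "Delta n dn = Max (dn ` {1..n})"

definition moment :: "nat \<Rightarrow> nat \<Rightarrow> (nat \<Rightarrow> nat) \<Rightarrow> nat" where
  "moment k n dn = (\<Sum>j=1..n. dn j ^ k)"

definition sigma2 :: "nat \<Rightarrow> (nat \<Rightarrow> nat) \<Rightarrow> real" where
  "sigma2 n dn = real (moment 2 n dn) / real n - 1"

definition rfg :: "nat \<Rightarrow> (nat \<Rightarrow> nat) \<Rightarrow> (nat \<Rightarrow> nat) pmf" where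
  "rfg n dn = pmf_of_set (funs_deg n dn)"

end

theory Submission
  imports Defs "HOL-Combinatorics.Multiset_Permutations"
begin

text \<open>The event \<open>s(u) > j\<close> says that the first \<open>j + 1\<close> iterates of \<open>u\<close> are distinct, i.e. that
  \<open>F\<close> follows one of the simple paths of length \<open>j\<close> out of \<open>u\<close>. Counting maps with prescribed
  fibre sizes gives \<open>P(s(u) > j) \<cdot> (n choose j) = e\<^sub>j\<close>, the \<open>j\<close>-th elementary symmetric
  polynomial of the in-degrees of the vertices \<open>c \<noteq> u\<close>. Averaging over \<open>j \<sim> Bin(n, p)\<close>
  therefore turns the survival function into \<open>(1 - p)\<^sup>n \<Prod>\<^sub>c\<^sub>\<noteq>\<^sub>u (1 + d\<^sub>c p / (1 - p))\<close>, which for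
  \<open>p = \<theta> x / \<surd>(n \<sigma>\<^sup>2)\<close> is
  \<open>exp (- \<theta>\<^sup>2 x\<^sup>2 / 2 + o(1))\<close> because \<open>\<Sum>\<^sub>c d\<^sub>c (d\<^sub>c - 1) = n \<sigma>\<^sup>2\<close> and \<open>\<Delta> = o(\<surd>(n \<sigma>\<^sup>2))\<close>.
  As \<open>j \<mapsto> P(s(u) > j)\<close> is antitone and \<open>Bin(n, p)\<close> concentrates around
  \<open>n p = \<theta> x \<surd>(n / \<sigma>\<^sup>2)\<close> by Chebyshev, letting \<open>\<theta> \<rightarrow> 1\<close> from both sides gives the limit.\<close>

section \<open>Maps with prescribed fibre sizes\<close>

definition fibre_funs :: "'a set \<Rightarrow> 'b set \<Rightarrow> ('b \<Rightarrow> nat) \<Rightarrow> ('a \<Rightarrow> 'b) set" where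
  "fibre_funs A B g = {f \<in> A \<rightarrow>\<^sub>E B. \<forall>b\<in>B. card {a\<in>A. f a = b} = g b}"

lemma funs_deg_eq_fibre_funs: "funs_deg n dn = fibre_funs {1..n} {1..n} dn"
  unfolding funs_deg_def fibre_funs_def ..

lemma finite_fibre_funs: "finite A \<Longrightarrow> finite B \<Longrightarrow> finite (fibre_funs A B g)"
  unfolding fibre_funs_def by (rule finite_subset[OF _ finite_PiE[of A "\<lambda>_. B"]]) auto

lemma card_fibre_remove:
  assumes "finite A" "a \<in> A"
  shows "card {x\<in>A. f x = c} = card {x\<in>A - {a}. f x = c} + (if f a = c then 1 else 0)"
proof -
  have "{x\<in>A. f x = c} =
      (if f a = c then insert a {x\<in>A - {a}. f x = c} else {x\<in>A - {a}. f x = c})"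
    using assms(2) by auto
  then show ?thesis using assms(1) by simp
qed

lemma fibre_funs_fix_value:
  assumes A: "finite A" "a \<in> A" and b: "b \<in> B" "g b \<ge> 1"
  shows "{f \<in> fibre_funs A B g. f a = b} =
         (\<lambda>f. f(a := b)) ` fibre_funs (A - {a}) B (g(b := g b - 1))"
proof (intro equalityI subsetI)
  fix f assume f: "f \<in> {f \<in> fibre_funs A B g. f a = b}"
  have "card {x \<in> A - {a}. (f(a := undefined)) x = c} = (g(b := g b - 1)) c" if "c \<in> B" for c
  proof -
    have "{x \<in> A - {a}. (f(a := undefined)) x = c} = {x \<in> A - {a}. f x = c}" by auto
    then show ?thesis using f that card_fibre_remove[OF A, of f c] by (auto simp: fibre_funs_def)
  qed
  then have "f(a := undefined) \<in> fibre_funs (A - {a}) B (g(b := g b - 1))"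
    using f by (auto simp: fibre_funs_def PiE_def extensional_def)
  moreover have "f = (f(a := undefined))(a := b)" using f by auto
  ultimately show "f \<in> (\<lambda>f. f(a := b)) ` fibre_funs (A - {a}) B (g(b := g b - 1))" by blast
next
  fix f assume "f \<in> (\<lambda>f. f(a := b)) ` fibre_funs (A - {a}) B (g(b := g b - 1))"
  then obtain h where h: "h \<in> fibre_funs (A - {a}) B (g(b := g b - 1))" and f: "f = h(a := b)"
    by blast
  have fa: "f a = b" by (simp add: f)
  have "card {x\<in>A. f x = c} = g c" if c: "c \<in> B" for c
  proof -
    have e: "{x\<in>A - {a}. f x = c} = {x\<in>A - {a}. h x = c}" by (auto simp: f)
    have hc: "card {x\<in>A - {a}. h x = c} = (g(b := g b - 1)) c"
      using h c unfolding fibre_funs_def by blast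
    show ?thesis using card_fibre_remove[OF A, of f c] b(2) unfolding e fa hc by auto
  qed
  then show "f \<in> {f \<in> fibre_funs A B g. f a = b}"
    using h A b by (auto simp: f fibre_funs_def PiE_def extensional_def)
qed

lemma prod_fact_decrement:
  assumes "finite B" "b \<in> B" "g b \<ge> 1"
  shows "(\<Prod>c\<in>B. fact (g c) :: real) = real (g b) * (\<Prod>c\<in>B. fact ((g(b := g b - 1)) c))"
proof -
  have "fact (g b) = real (g b) * fact (g b - 1)"
    using assms(3) by (metis fact_reduce of_nat_fact not_one_le_zero not_gr_zero)
  moreover have "(\<Prod>c\<in>B - {b}. fact ((g(b := g b - 1)) c) :: real) = (\<Prod>c\<in>B - {b}. fact (g c))"
    by (rule prod.cong) auto
  ultimately show ?thesis
    using prod.remove[OF assms(1,2), of "\<lambda>c. fact (g c) :: real"]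
          prod.remove[OF assms(1,2), of "\<lambda>c. fact ((g(b := g b - 1)) c) :: real"]
    by simp
qed

text \<open>No hypothesis on \<open>g b\<close> is needed: if \<open>g b = 0\<close> both sides vanish.\<close>

lemma card_fibre_funs_fix_value:
  assumes A: "finite A" "a \<in> A" and B: "finite B" "b \<in> B"
  shows "real (card {f \<in> fibre_funs A B g. f a = b \<and> Q f}) * (\<Prod>c\<in>B. fact (g c)) =
         real (g b) * (real (card {f \<in> fibre_funs (A - {a}) B (g(b := g b - 1)). Q (f(a := b))})
           * (\<Prod>c\<in>B. fact ((g(b := g b - 1)) c)))"
proof (cases "g b = 0")
  case True
  have empty: "{f \<in> fibre_funs A B g. f a = b \<and> Q f} = {}"
  proof (rule equals0I)
    fix f assume f: "f \<in> {f \<in> fibre_funs A B g. f a = b \<and> Q f}"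
    then have "card {x\<in>A. f x = b} = 0" using True B(2) by (auto simp: fibre_funs_def)
    then show False using card_fibre_remove[OF A, of f b] f by simp
  qed
  show ?thesis unfolding empty using True by simp
next
  case False
  let ?F' = "fibre_funs (A - {a}) B (g(b := g b - 1))"
  have inj: "inj_on (\<lambda>f. f(a := b)) ?F'"
  proof (rule inj_onI, rule ext)
    fix h h' x assume h: "h \<in> ?F'" "h' \<in> ?F'" and eq: "h(a := b) = h'(a := b)"
    show "h x = h' x"
    proof (cases "x = a")
      case True
      then show ?thesis using h by (auto simp: fibre_funs_def PiE_def extensional_def)
    next
      case False
      then show ?thesis using eq by (metis fun_upd_other)
    qed
  qed
  have "{f \<in> fibre_funs A B g. f a = b \<and> Q f} = {f \<in> fibre_funs A B g. f a = b} \<inter> Collect Q"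
    by blast
  also have "\<dots> = (\<lambda>f. f(a := b)) ` ?F' \<inter> Collect Q"
    using False by (subst fibre_funs_fix_value[OF A B(2)]) simp_all
  also have "\<dots> = (\<lambda>f. f(a := b)) ` {f \<in> ?F'. Q (f(a := b))}"
    by blast
  finally have "card {f \<in> fibre_funs A B g. f a = b \<and> Q f} = card {f \<in> ?F'. Q (f(a := b))}"
    by (simp add: card_image inj_on_subset[OF inj])
  then show ?thesis using prod_fact_decrement[OF B, of g] False by simp
qed

lemma card_fibre_funs:
  assumes "finite A" "finite B" "sum g B = card A"
  shows "real (card (fibre_funs A B g)) * (\<Prod>b\<in>B. fact (g b)) = fact (card A)"
  using assms
proof (induction A arbitrary: g rule: finite_induct)
  case empty
  then have single: "fibre_funs {} B g = {\<lambda>_. undefined}" by (auto simp: fibre_funs_def)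
  show ?case unfolding single using empty by simp
next
  case (insert a A)
  let ?S = "fibre_funs (insert a A) B g"
  have fin: "finite ?S" using insert by (simp add: finite_fibre_funs)
  have S: "?S = (\<Union>b\<in>B. {f \<in> ?S. f a = b})" by (auto simp: fibre_funs_def PiE_def)
  have "card ?S = (\<Sum>b\<in>B. card {f \<in> ?S. f a = b})"
    by (subst S, rule card_UN_disjoint) (use fin insert.prems(1) in auto)
  then have "real (card ?S) * (\<Prod>b\<in>B. fact (g b)) =
      (\<Sum>b\<in>B. real (card {f \<in> ?S. f a = b}) * (\<Prod>b\<in>B. fact (g b)))"
    by (simp add: sum_distrib_right)
  also have "\<dots> = (\<Sum>b\<in>B. real (g b) * fact (card A))"
  proof (rule sum.cong[OF refl])
    fix b assume b: "b \<in> B"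
    let ?g = "g(b := g b - 1)"
    have split: "real (card {f \<in> ?S. f a = b}) * (\<Prod>b\<in>B. fact (g b)) =
        real (g b) * (real (card (fibre_funs A B ?g)) * (\<Prod>c\<in>B. fact (?g c)))"
      using card_fibre_funs_fix_value[of "insert a A" a B b g "\<lambda>_. True"] insert b by simp
    show "real (card {f \<in> ?S. f a = b}) * (\<Prod>b\<in>B. fact (g b)) = real (g b) * fact (card A)"
    proof (cases "g b = 0")
      case True
      then show ?thesis using split by simp
    next
      case False
      then have "sum ?g B = card A"
        using insert.prems b sum.remove[OF insert.prems(1) b, of g]
              sum.remove[OF insert.prems(1) b, of ?g] insert.hyps
        by simp
      then have "real (card (fibre_funs A B ?g)) * (\<Prod>c\<in>B. fact (?g c)) = fact (card A)"
        by (rule insert.IH[OF insert.prems(1)])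
      then show ?thesis using split by simp
    qed
  qed
  also have "\<dots> = fact (card (insert a A))"
    using insert by (simp add: sum_distrib_right[symmetric] flip: of_nat_sum)
  finally show ?case .
qed

section \<open>The survival function of the six-length\<close>

fun traces :: "('a \<Rightarrow> 'a) \<Rightarrow> 'a \<Rightarrow> 'a list \<Rightarrow> bool" where
  "traces f u [] = True"
| "traces f u (x # xs) \<longleftrightarrow> f u = x \<and> traces f x xs"

lemma traces_fun_upd: "u \<notin> set (butlast (x # xs)) \<Longrightarrow> traces (f(u := w)) x xs = traces f x xs"
  by (induction xs arbitrary: x) auto

lemma traces_iff: "traces f u xs \<longleftrightarrow> xs = map (\<lambda>i. (f ^^ Suc i) u) [0..<length xs]"
proof (induction xs arbitrary: u)
  case Nil
  then show ?case by simp
next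
  case (Cons x xs)
  have "map (\<lambda>i. (f ^^ Suc i) u) [0..<length (x # xs)] =
      f u # map (\<lambda>i. (f ^^ Suc i) (f u)) [0..<length xs]"
    by (simp only: length_Cons map_upt_Suc) (simp add: funpow_swap1)
  then show ?case using Cons.IH[of "f u"] by auto
qed

lemma card_fibre_funs_traces:
  assumes A: "finite A" and B: "finite B" "set xs \<subseteq> B" and sum: "sum g B = card A"
    and path: "distinct (u # xs)" "set (butlast (u # xs)) \<subseteq> A"
  shows "real (card {f \<in> fibre_funs A B g. traces f u xs}) * (\<Prod>b\<in>B. fact (g b)) =
         fact (card A - length xs) * (\<Prod>b\<in>set xs. real (g b))"
  using assms
proof (induction xs arbitrary: u A g)
  case Nil
  then show ?case using card_fibre_funs[of A B g] by simp
next
  case (Cons x xs)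
  let ?g = "g(x := g x - 1)"
  have uA: "u \<in> A" and xB: "x \<in> B" and xxs: "x \<notin> set xs" using Cons.prems by auto
  have nb: "u \<notin> set (butlast (x # xs))"
    using Cons.prems(5) by (metis distinct.simps(2) in_set_butlastD)
  have step: "real (card {f \<in> fibre_funs A B g. traces f u (x # xs)}) * (\<Prod>b\<in>B. fact (g b)) =
      real (g x) * (real (card {f \<in> fibre_funs (A - {u}) B ?g. traces f x xs}) * (\<Prod>b\<in>B. fact (?g b)))"
    using card_fibre_funs_fix_value[OF Cons.prems(1) uA Cons.prems(2) xB, of g "\<lambda>f. traces f x xs"]
    by (simp add: traces_fun_upd[OF nb])
  show ?case
  proof (cases "g x = 0")
    case True
    then have "(\<Prod>b\<in>set (x # xs). real (g b)) = 0" by (intro prod_zero) auto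
    then show ?thesis unfolding step using True by simp
  next
    case False
    have "sum ?g B = card (A - {u})"
      using Cons.prems(2,4) xB False uA Cons.prems(1) sum.remove[OF Cons.prems(2) xB, of g]
        sum.remove[OF Cons.prems(2) xB, of ?g]
      by simp
    then have IH: "real (card {f \<in> fibre_funs (A - {u}) B ?g. traces f x xs}) * (\<Prod>b\<in>B. fact (?g b)) =
        fact (card (A - {u}) - length xs) * (\<Prod>b\<in>set xs. real (?g b))"
      using Cons.prems nb by (intro Cons.IH) (auto dest: in_set_butlastD)
    have "(\<Prod>b\<in>set xs. real (?g b)) = (\<Prod>b\<in>set xs. real (g b))"
      by (rule prod.cong) (use xxs in auto)
    moreover have "card (A - {u}) - length xs = card A - length (x # xs)"
      using uA Cons.prems(1) by simp
    ultimately show ?thesis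
      unfolding step IH using xxs by (simp add: mult.assoc mult.left_commute)
  qed
qed

lemma distinct_iterates_iff:
  "distinct (map (\<lambda>i. (f ^^ i) u) [0..<Suc j]) \<longleftrightarrow>
   (\<forall>k\<le>j. \<not> (k \<ge> 1 \<and> (f ^^ k) u \<in> {(f ^^ i) u | i. i \<le> k - 1}))"
proof (induction j)
  case 0
  then show ?case by simp
next
  case (Suc j)
  define Q where "Q k \<longleftrightarrow> \<not> (k \<ge> 1 \<and> (f ^^ k) u \<in> {(f ^^ i) u | i. i \<le> k - 1})" for k
  have s: "set (map (\<lambda>i. (f ^^ i) u) [0..<Suc j]) = {(f ^^ i) u | i. i \<le> Suc j - 1}"
  proof -
    have "set (map (\<lambda>i. (f ^^ i) u) [0..<Suc j]) = (\<lambda>i. (f ^^ i) u) ` {..j}"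
      by (simp only: set_map set_upt atLeast0LessThan lessThan_Suc_atMost)
    then show ?thesis by auto
  qed
  have "distinct (map (\<lambda>i. (f ^^ i) u) [0..<Suc (Suc j)]) \<longleftrightarrow>
      distinct (map (\<lambda>i. (f ^^ i) u) [0..<Suc j]) \<and>
      (f ^^ Suc j) u \<notin> set (map (\<lambda>i. (f ^^ i) u) [0..<Suc j])"
    by (simp only: upt_Suc_append[of 0 "Suc j"] map_append distinct_append) auto
  also have "\<dots> \<longleftrightarrow> (\<forall>k\<le>j. Q k) \<and> Q (Suc j)"
    unfolding Suc.IH s Q_def by simp
  also have "\<dots> \<longleftrightarrow> (\<forall>k\<le>Suc j. Q k)" by (auto simp: le_Suc_eq)
  finally show ?case unfolding Q_def .
qed

lemma six_length_gt_iff_distinct_iterates: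
  assumes "finite V" "\<And>i. (f ^^ i) u \<in> V"
  shows "six_length f u > j \<longleftrightarrow> distinct (map (\<lambda>i. (f ^^ i) u) [0..<Suc j])"
proof -
  define P where "P k \<longleftrightarrow> k \<ge> 1 \<and> (f ^^ k) u \<in> {(f ^^ i) u | i. i \<le> k - 1}" for k
  have sl: "six_length f u = (LEAST k. P k)" unfolding six_length_def P_def ..
  \<comment> \<open>by pigeonhole the first \<open>card V + 1\<close> iterates repeat, so the \<open>LEAST\<close> is attained\<close>
  have "\<not> distinct (map (\<lambda>i. (f ^^ i) u) [0..<Suc (card V)])"
  proof
    assume d: "distinct (map (\<lambda>i. (f ^^ i) u) [0..<Suc (card V)])"
    have "set (map (\<lambda>i. (f ^^ i) u) [0..<Suc (card V)]) \<subseteq> V" using assms(2) by auto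
    then have "card (set (map (\<lambda>i. (f ^^ i) u) [0..<Suc (card V)])) \<le> card V"
      by (rule card_mono[OF assms(1)])
    then show False using distinct_card[OF d] by simp
  qed
  then obtain k0 where "P k0" unfolding distinct_iterates_iff P_def by blast
  then have "P (LEAST k. P k)" by (rule LeastI)
  then show ?thesis
    unfolding sl distinct_iterates_iff P_def[symmetric]
    by (metis Least_le le_less_trans not_le)
qed

lemma funpow_in_PiE: "f \<in> V \<rightarrow>\<^sub>E V \<Longrightarrow> u \<in> V \<Longrightarrow> (f ^^ i) u \<in> V"
  by (induction i) auto

definition simple_paths :: "'a \<Rightarrow> 'a set \<Rightarrow> nat \<Rightarrow> 'a list set" where
  "simple_paths u V j = {xs. length xs = j \<and> distinct (u # xs) \<and> set xs \<subseteq> V}"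

lemma finite_simple_paths: "finite V \<Longrightarrow> finite (simple_paths u V j)"
  unfolding simple_paths_def
  by (rule finite_subset[OF _ finite_lists_length_eq[of V j]]) auto

lemma six_length_gt_iff_traces:
  assumes V: "finite V" "u \<in> V" and f: "f \<in> V \<rightarrow>\<^sub>E V"
  shows "six_length f u > j \<longleftrightarrow> (\<exists>xs\<in>simple_paths u V j. traces f u xs)"
proof -
  have it: "(f ^^ i) u \<in> V" for i using f V(2) by (rule funpow_in_PiE)
  have iterates: "map (\<lambda>i. (f ^^ i) u) [0..<Suc j] = u # map (\<lambda>i. (f ^^ Suc i) u) [0..<j]"
    by (simp only: map_upt_Suc) simp
  show ?thesis
  proof
    let ?xs = "map (\<lambda>i. (f ^^ Suc i) u) [0..<j]"
    assume "j < six_length f u"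
    then have "distinct (u # ?xs)"
      using six_length_gt_iff_distinct_iterates[OF V(1) it] iterates by metis
    moreover have "set ?xs \<subseteq> V" using it by (auto simp del: funpow.simps)
    ultimately have "?xs \<in> simple_paths u V j" unfolding simple_paths_def by simp
    moreover have "traces f u ?xs" by (simp add: traces_iff)
    ultimately show "\<exists>xs\<in>simple_paths u V j. traces f u xs" by blast
  next
    assume "\<exists>xs\<in>simple_paths u V j. traces f u xs"
    then obtain xs where xs: "xs \<in> simple_paths u V j" "traces f u xs" by blast
    then have "xs = map (\<lambda>i. (f ^^ Suc i) u) [0..<j]"
      using traces_iff[of f u xs] by (simp add: simple_paths_def)
    then have "distinct (map (\<lambda>i. (f ^^ i) u) [0..<Suc j])"
      unfolding iterates using xs(1) by (simp add: simple_paths_def)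
    then show "j < six_length f u"
      using six_length_gt_iff_distinct_iterates[OF V(1) it] by blast
  qed
qed

lemma card_six_length_gt:
  assumes V: "finite V" "u \<in> V" "sum g V = card V"
  shows "real (card {f \<in> fibre_funs V V g. six_length f u > j}) * (\<Prod>b\<in>V. fact (g b)) =
         fact (card V - j) * (\<Sum>xs\<in>simple_paths u V j. \<Prod>b\<in>set xs. real (g b))"
proof -
  have eq: "{f \<in> fibre_funs V V g. six_length f u > j} =
      (\<Union>xs\<in>simple_paths u V j. {f \<in> fibre_funs V V g. traces f u xs})"
    using six_length_gt_iff_traces[OF V(1,2)] by (auto simp: fibre_funs_def)
  have "card {f \<in> fibre_funs V V g. six_length f u > j} =
      (\<Sum>xs\<in>simple_paths u V j. card {f \<in> fibre_funs V V g. traces f u xs})"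
    unfolding eq
  proof (rule card_UN_disjoint)
    show "finite (simple_paths u V j)" using V(1) by (rule finite_simple_paths)
    show "\<forall>xs\<in>simple_paths u V j. finite {f \<in> fibre_funs V V g. traces f u xs}"
      using finite_fibre_funs[OF V(1) V(1), of g] by simp
    show "\<forall>xs\<in>simple_paths u V j. \<forall>ys\<in>simple_paths u V j. xs \<noteq> ys \<longrightarrow>
        {f \<in> fibre_funs V V g. traces f u xs} \<inter> {f \<in> fibre_funs V V g. traces f u ys} = {}"
      using traces_iff[of _ u] by (auto simp: simple_paths_def)
  qed
  then have "real (card {f \<in> fibre_funs V V g. six_length f u > j}) * (\<Prod>b\<in>V. fact (g b)) =
      (\<Sum>xs\<in>simple_paths u V j.
        real (card {f \<in> fibre_funs V V g. traces f u xs}) * (\<Prod>b\<in>V. fact (g b)))"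
    by (simp add: sum_distrib_right)
  also have "\<dots> = (\<Sum>xs\<in>simple_paths u V j. fact (card V - j) * (\<Prod>b\<in>set xs. real (g b)))"
  proof (rule sum.cong[OF refl])
    fix xs assume xs: "xs \<in> simple_paths u V j"
    have "set (butlast (u # xs)) \<subseteq> set (u # xs)" by (rule in_set_butlastD[THEN subsetI])
    then have "set (butlast (u # xs)) \<subseteq> V" using xs V(2) by (auto simp: simple_paths_def)
    then show "real (card {f \<in> fibre_funs V V g. traces f u xs}) * (\<Prod>b\<in>V. fact (g b)) =
        fact (card V - j) * (\<Prod>b\<in>set xs. real (g b))"
      using card_fibre_funs_traces[of V V xs g u] V xs by (auto simp: simple_paths_def)
  qed
  finally show ?thesis by (simp add: sum_distrib_left)
qed

definition elem_sym :: "'a set \<Rightarrow> ('a \<Rightarrow> real) \<Rightarrow> nat \<Rightarrow> real" where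
  "elem_sym C w j = (\<Sum>T | T \<subseteq> C \<and> card T = j. \<Prod>b\<in>T. w b)"

lemma sum_simple_paths_eq_elem_sym:
  assumes "finite V"
  shows "(\<Sum>xs\<in>simple_paths u V j. \<Prod>b\<in>set xs. w b) = fact j * elem_sym (V - {u}) w j"
proof -
  let ?I = "{T. T \<subseteq> V - {u} \<and> card T = j}"
  have finI: "finite ?I" by (rule finite_subset[of _ "Pow (V - {u})"]) (use assms in auto)
  have eq: "simple_paths u V j = (\<Union>T\<in>?I. permutations_of_set T)"
    by (auto simp: simple_paths_def permutations_of_set_def distinct_card)
  have "(\<Sum>xs\<in>simple_paths u V j. \<Prod>b\<in>set xs. w b) =
      (\<Sum>T\<in>?I. \<Sum>xs\<in>permutations_of_set T. \<Prod>b\<in>set xs. w b)"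
    unfolding eq
  proof (rule sum.UNION_disjoint[OF finI])
    show "\<forall>T\<in>?I. finite (permutations_of_set T)" by simp
    show "\<forall>T\<in>?I. \<forall>T'\<in>?I. T \<noteq> T' \<longrightarrow> permutations_of_set T \<inter> permutations_of_set T' = {}"
      by (auto simp: permutations_of_set_def)
  qed
  also have "\<dots> = (\<Sum>T\<in>?I. fact j * (\<Prod>b\<in>T. w b))"
  proof (rule sum.cong[OF refl])
    fix T assume T: "T \<in> ?I"
    then have "finite T" using assms finite_subset by blast
    have "(\<Sum>xs\<in>permutations_of_set T. \<Prod>b\<in>set xs. w b) =
        (\<Sum>xs\<in>permutations_of_set T. \<Prod>b\<in>T. w b)"
      by (rule sum.cong) (auto simp: permutations_of_set_def)
    then show "(\<Sum>xs\<in>permutations_of_set T. \<Prod>b\<in>set xs. w b) = fact j * (\<Prod>b\<in>T. w b)"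
      using T \<open>finite T\<close> by simp
  qed
  finally show ?thesis by (simp add: elem_sym_def sum_distrib_left)
qed

lemma prod_one_plus_eq_sum_elem_sym:
  assumes "finite C" "card C \<le> n"
  shows "(\<Prod>c\<in>C. 1 + w c * y) = (\<Sum>j\<le>n. elem_sym C w j * y ^ j)"
proof -
  have "(\<Prod>c\<in>C. 1 + w c * y) = (\<Sum>X\<in>Pow C. (\<Prod>c\<in>X. w c * y) * (\<Prod>c\<in>C - X. 1))"
    using prod_add[OF assms(1), of "\<lambda>c. w c * y" "\<lambda>_. 1"] by (simp add: add.commute)
  also have "\<dots> = (\<Sum>X\<in>Pow C. (\<Prod>c\<in>X. w c) * y ^ card X)"
    by (simp add: prod.distrib)
  also have "\<dots> = (\<Sum>j\<le>n. \<Sum>X | X \<in> Pow C \<and> card X = j. (\<Prod>c\<in>X. w c) * y ^ card X)"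
    using assms card_mono[OF assms(1)]
    by (intro sum.group[symmetric]) (auto intro: order_trans)
  also have "\<dots> = (\<Sum>j\<le>n. elem_sym C w j * y ^ j)"
    unfolding elem_sym_def by (auto simp: sum_distrib_right intro!: sum.cong)
  finally show ?thesis .
qed

lemma prob_six_length_gt:
  assumes n: "sum D {1..n} = n" and u: "u \<in> {1..n}" and j: "j \<le> n"
  shows "measure_pmf.prob (rfg n D) {f. six_length f u > j} * real (n choose j) =
         elem_sym ({1..n} - {u}) (\<lambda>c. real (D c)) j"
proof -
  let ?F = "fibre_funs {1..n} {1..n} D"
  let ?E = "{f \<in> ?F. six_length f u > j}"
  let ?\<Pi> = "\<Prod>b\<in>{1..n}. fact (D b) :: real"
  have cF: "real (card ?F) * ?\<Pi> = fact n"
    using card_fibre_funs[of "{1..n}" "{1..n}" D] n by simp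
  have cE: "real (card ?E) * ?\<Pi> = fact (n - j) * (fact j * elem_sym ({1..n} - {u}) (\<lambda>c. real (D c)) j)"
    using card_six_length_gt[of "{1..n}" u D j] sum_simple_paths_eq_elem_sym[where V="{1..n}" and u=u and j=j] n u
    by simp
  have "?F \<noteq> {}" using cF by (metis card.empty fact_nonzero mult_zero_left of_nat_0)
  then have "measure_pmf.prob (rfg n D) {f. six_length f u > j} = real (card ?E) / real (card ?F)"
    unfolding rfg_def funs_deg_eq_fibre_funs
    by (simp add: measure_pmf_of_set finite_fibre_funs Int_def)
  also have "\<dots> = real (card ?E) * ?\<Pi> / (real (card ?F) * ?\<Pi>)"
    by (simp add: prod_pos)
  finally show ?thesis
    unfolding cE cF using j by (simp add: binomial_fact field_simps)
qed

abbreviation binom_weight :: "nat \<Rightarrow> real \<Rightarrow> nat \<Rightarrow> real" where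
  "binom_weight n p j \<equiv> real (n choose j) * p ^ j * (1 - p) ^ (n - j)"

lemma binomial_mixture_six_length:
  assumes n: "sum D {1..n} = n" and u: "u \<in> {1..n}" and p: "0 \<le> p" "p < 1"
  shows "(\<Sum>j\<le>n. binom_weight n p j *
            measure_pmf.prob (rfg n D) {f. six_length f u > j}) =
         (1 - p) ^ n * (\<Prod>c\<in>{1..n} - {u}. 1 + real (D c) * (p / (1 - p)))"
proof -
  let ?C = "{1..n} - {u}"
  have "(\<Sum>j\<le>n. binom_weight n p j *
            measure_pmf.prob (rfg n D) {f. six_length f u > j}) =
      (\<Sum>j\<le>n. (1 - p) ^ n * (elem_sym ?C (\<lambda>c. real (D c)) j * (p / (1 - p)) ^ j))"
  proof (rule sum.cong[OF refl])
    fix j assume "j \<in> {..n}"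
    then have j: "j \<le> n" by simp
    have "(1 - p) ^ n = (1 - p) ^ (n - j) * (1 - p) ^ j" using j by (simp flip: power_add)
    then have "(1 - p) ^ n * (p / (1 - p)) ^ j = p ^ j * (1 - p) ^ (n - j)"
      using p by (simp add: power_divide)
    then show "binom_weight n p j *
          measure_pmf.prob (rfg n D) {f. six_length f u > j} =
        (1 - p) ^ n * (elem_sym ?C (\<lambda>c. real (D c)) j * (p / (1 - p)) ^ j)"
      unfolding prob_six_length_gt[OF n u j, symmetric] by (simp add: ac_simps)
  qed
  also have "\<dots> = (1 - p) ^ n * (\<Prod>c\<in>?C. 1 + real (D c) * (p / (1 - p)))"
    using prod_one_plus_eq_sum_elem_sym[of ?C n "\<lambda>c. real (D c)" "p / (1 - p)"]
      card_Diff1_le[of "{1..n}" u]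
    by (simp add: sum_distrib_left)
  finally show ?thesis .
qed

section \<open>Elementary estimates and binomial weights\<close>

lemma ln_one_plus_le:
  fixes t :: real
  assumes "t \<ge> 0"
  shows "ln (1 + t) \<le> t - t^2/2 + t^3/3"
proof -
  let ?g = "\<lambda>s::real. s - s^2/2 + s^3/3 - ln (1 + s)"
  have "?g 0 \<le> ?g t"
  proof (rule DERIV_nonneg_imp_nondecreasing[OF assms])
    fix x :: real assume x: "0 \<le> x" "x \<le> t"
    have "(?g has_real_derivative (1 - x + x^2 - 1/(1+x))) (at x)"
      using x by (auto intro!: derivative_eq_intros simp: power2_eq_square)
    moreover have "1 - x + x^2 - 1/(1+x) = x^3/(1+x)" using x
      by (simp add: field_simps power2_eq_square power3_eq_cube)
    moreover have "x^3/(1+x) \<ge> 0" using x by simp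
    ultimately show "\<exists>y. (?g has_real_derivative y) (at x) \<and> 0 \<le> y" by auto
  qed
  then show ?thesis by simp
qed

lemma ln_one_plus_ge:
  fixes t :: real
  assumes "t \<ge> 0"
  shows "t - t^2/2 \<le> ln (1 + t)"
proof -
  let ?g = "\<lambda>s::real. ln (1 + s) - s + s^2/2"
  have "?g 0 \<le> ?g t"
  proof (rule DERIV_nonneg_imp_nondecreasing[OF assms])
    fix x :: real assume x: "0 \<le> x" "x \<le> t"
    have "(?g has_real_derivative (1/(1+x) - 1 + x)) (at x)"
      using x by (auto intro!: derivative_eq_intros simp: power2_eq_square)
    moreover have "1/(1+x) - 1 + x = x^2/(1+x)" using x
      by (simp add: field_simps power2_eq_square)
    moreover have "x^2/(1+x) \<ge> 0" using x by simp
    ultimately show "\<exists>y. (?g has_real_derivative y) (at x) \<and> 0 \<le> y" by auto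
  qed
  then show ?thesis by simp
qed

lemma ln_one_minus_le:
  fixes p :: real
  assumes "p \<ge> 0" "p < 1"
  shows "ln (1 - p) \<le> - p - p^2/2"
proof -
  let ?g = "\<lambda>s::real. - s - s^2/2 - ln (1 - s)"
  have "?g 0 \<le> ?g p"
  proof (rule DERIV_nonneg_imp_nondecreasing[OF assms(1)])
    fix x :: real assume x: "0 \<le> x" "x \<le> p"
    have "(?g has_real_derivative (- 1 - x + 1/(1-x))) (at x)"
      using x assms by (auto intro!: derivative_eq_intros simp: power2_eq_square)
    moreover have "- 1 - x + 1/(1-x) = x^2/(1-x)" using x assms
      by (simp add: field_simps power2_eq_square)
    moreover have "x^2/(1-x) \<ge> 0" using x assms by simp
    ultimately show "\<exists>y. (?g has_real_derivative y) (at x) \<and> 0 \<le> y" by auto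
  qed
  then show ?thesis by simp
qed

lemma ln_one_minus_ge:
  fixes p :: real
  assumes "p \<ge> 0" "p \<le> 1/2"
  shows "- p - p^2/2 - p^3 \<le> ln (1 - p)"
proof -
  let ?g = "\<lambda>s::real. ln (1 - s) + s + s^2/2 + s^3"
  have "?g 0 \<le> ?g p"
  proof (rule DERIV_nonneg_imp_nondecreasing[OF assms(1)])
    fix x :: real assume x: "0 \<le> x" "x \<le> p"
    have "(?g has_real_derivative (- 1/(1-x) + 1 + x + 3 * x^2)) (at x)"
      using x assms by (auto intro!: derivative_eq_intros simp: power2_eq_square)
    moreover have "- 1/(1-x) + 1 + x + 3 * x^2 = x^2 * (2 - 3*x)/(1-x)" using x assms
      by (simp add: field_simps power2_eq_square)
    moreover have "x^2 * (2 - 3*x)/(1-x) \<ge> 0" using x assms by simp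
    ultimately show "\<exists>y. (?g has_real_derivative y) (at x) \<and> 0 \<le> y" by auto
  qed
  then show ?thesis by simp
qed

text \<open>For \<open>p < 1\<close> this is \<open>P(Bin(a, p) \<le> 1)\<close>, the factor contributed to the binomial mixture by a
  vertex of in-degree \<open>a\<close>.\<close>

definition deg_factor :: "real \<Rightarrow> nat \<Rightarrow> real" where
  "deg_factor p a = (1 - p) ^ a * (1 + real a * (p / (1 - p)))"

lemma deg_factor_Suc: "p < 1 \<Longrightarrow> deg_factor p (Suc m) = (1 - p) ^ m * (1 + real m * p)"
  by (simp add: deg_factor_def field_simps)

lemma deg_factor_le_exp:
  assumes p: "0 \<le> p" "p \<le> 1/2"
  shows "deg_factor p a \<le> exp (- real a * (real a - 1) * p^2 / 2 + real a * (real a - 1)^2 * p^3 / 3)"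
proof (cases a)
  case 0 then show ?thesis by (simp add: deg_factor_def)
next
  case (Suc m)
  have pos: "1 - p > 0" "1 + real m * p > 0" using p by (auto intro: add_pos_nonneg)
  have "deg_factor p a = exp (real m * ln (1 - p) + ln (1 + real m * p))"
    using pos p by (simp add: Suc deg_factor_Suc exp_add exp_of_nat_mult)
  also have "\<dots> \<le> exp (real m * (- p - p^2/2) + (real m * p - (real m * p)^2/2 + (real m * p)^3/3))"
    using ln_one_minus_le[of p] ln_one_plus_le[of "real m * p"] p
    by (intro exp_mono add_mono mult_left_mono) auto
  also have "\<dots> \<le> exp (- real a * (real a - 1) * p^2 / 2 + real a * (real a - 1)^2 * p^3 / 3)"
  proof (rule exp_mono)
    have h: "real m ^ 3 \<le> (real m + 1) * real m ^ 2"
    proof -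
      have "real m * real m ^ 2 \<le> (real m + 1) * real m ^ 2" by (intro mult_right_mono) auto
      then show ?thesis by (simp add: power3_eq_cube power2_eq_square)
    qed
    have "real m ^ 3 * p ^ 3 \<le> (real m + 1) * real m ^ 2 * p ^ 3" using p
      by (intro mult_right_mono[OF h]) auto
    then show "real m * (- p - p^2/2) + (real m * p - (real m * p)^2/2 + (real m * p)^3/3)
       \<le> - real a * (real a - 1) * p^2 / 2 + real a * (real a - 1)^2 * p^3 / 3"
    proof -
      have eqL: "real m * (- p - p^2/2) + (real m * p - (real m * p)^2/2 + (real m * p)^3/3)
          = -(real m + real m^2)*p^2/2 + real m^3*p^3/3"
        by (simp add: field_simps power2_eq_square power3_eq_cube)
      have eqR: "- real a * (real a - 1) * p^2 / 2 + real a * (real a - 1)^2 * p^3 / 3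
          = -(real m + real m^2)*p^2/2 + (real m + 1) * real m ^ 2 * p ^ 3/3"
        by (simp add: Suc field_simps power2_eq_square power3_eq_cube)
      show ?thesis unfolding eqL eqR using \<open>real m ^ 3 * p ^ 3 \<le> (real m + 1) * real m ^ 2 * p ^ 3\<close> by linarith
    qed
  qed
  finally show ?thesis .
qed

lemma exp_le_deg_factor:
  assumes p: "0 \<le> p" "p \<le> 1/2"
  shows "exp (- real a * (real a - 1) * p^2 / 2 - real a * (real a - 1) * p^3) \<le> deg_factor p a"
proof (cases a)
  case 0 then show ?thesis by (simp add: deg_factor_def)
next
  case (Suc m)
  have pos: "1 - p > 0" "1 + real m * p > 0" using p by (auto intro: add_pos_nonneg)
  have "exp (- real a * (real a - 1) * p^2 / 2 - real a * (real a - 1) * p^3)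
     \<le> exp (real m * (- p - p^2/2 - p^3) + (real m * p - (real m * p)^2/2))"
  proof (rule exp_mono)
    have h: "real m \<le> (real m + 1) * real m" by (simp add: algebra_simps)
    have "real m * p ^ 3 \<le> (real m + 1) * real m * p ^ 3" using p
      by (intro mult_right_mono[OF h]) auto
    then show "- real a * (real a - 1) * p^2 / 2 - real a * (real a - 1) * p^3
      \<le> real m * (- p - p^2/2 - p^3) + (real m * p - (real m * p)^2/2)"
    proof -
      have eqL: "real m * (- p - p^2/2 - p^3) + (real m * p - (real m * p)^2/2)
          = -(real m + real m^2)*p^2/2 - real m*p^3"
        by (simp add: field_simps power2_eq_square power3_eq_cube)
      have eqR: "- real a * (real a - 1) * p^2 / 2 - real a * (real a - 1) * p^3
          = -(real m + real m^2)*p^2/2 - (real m + 1) * real m * p ^ 3"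
        by (simp add: Suc field_simps power2_eq_square power3_eq_cube)
      show ?thesis unfolding eqL eqR using \<open>real m * p ^ 3 \<le> (real m + 1) * real m * p ^ 3\<close> by linarith
    qed
  qed
  also have "\<dots> \<le> exp (real m * ln (1 - p) + ln (1 + real m * p))"
    using ln_one_minus_ge[of p] ln_one_plus_ge[of "real m * p"] p
    by (intro exp_mono add_mono mult_left_mono) auto
  also have "\<dots> = deg_factor p a"
    using pos p by (simp add: Suc deg_factor_Suc exp_add exp_of_nat_mult)
  finally show ?thesis .
qed

lemma sum_binomial_weights: "(\<Sum>j\<le>n. binom_weight n p j) = 1"
  using binomial_ring[of p "1 - p" n] by simp

lemma binomial_factorial_moment:
  "(\<Sum>j\<le>n. real (j choose r) * binom_weight n p j) = real (n choose r) * p ^ r"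
proof (cases "r \<le> n")
  case False
  then show ?thesis by (subst sum.neutral) auto
next
  case True
  have "(\<Sum>j\<le>n. real (j choose r) * binom_weight n p j) =
      (\<Sum>j=r..n. real (j choose r) * binom_weight n p j)"
    by (rule sum.mono_neutral_right) auto
  also have "\<dots> = (\<Sum>i=0..n-r. real ((i + r) choose r) * binom_weight n p (i + r))"
    using True sum.shift_bounds_cl_nat_ivl[of "\<lambda>j. real (j choose r) * binom_weight n p j" 0 r "n - r"]
    by simp
  also have "\<dots> = (\<Sum>i=0..n-r. real (n choose r) * p ^ r * binom_weight (n - r) p i)"
  proof (rule sum.cong[OF refl])
    fix i assume "i \<in> {0..n-r}"
    then have i: "i + r \<le> n" using True by simp
    have "real (n choose (i + r)) * real ((i + r) choose r) = real (n choose r) * real ((n - r) choose i)"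
      using choose_mult[of r "i + r" n] i by (simp flip: of_nat_mult)
    moreover have "n - (i + r) = n - r - i" by simp
    ultimately show "real ((i + r) choose r) * binom_weight n p (i + r) =
        real (n choose r) * p ^ r * binom_weight (n - r) p i"
      by (simp add: power_add algebra_simps)
  qed
  also have "\<dots> = real (n choose r) * p ^ r"
    by (simp only: atLeast0AtMost sum_distrib_left[symmetric] sum_binomial_weights mult_1_right)
  finally show ?thesis .
qed

lemma binomial_variance:
  "(\<Sum>j\<le>n. (real j - real n * p)^2 * binom_weight n p j) = real n * p * (1 - p)"
proof -
  have choose2: "2 * real (j choose 2) = real j * (real j - 1)" for j
    by (induction j) (simp_all add: numeral_2_eq_2 algebra_simps)
  then have sq: "(real j - c)^2 = 2 * real (j choose 2) + real (j choose 1) * (1 - 2 * c) + c^2" for j c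
    by (simp add: power2_eq_square algebra_simps)
  have "(\<Sum>j\<le>n. (real j - real n * p)^2 * binom_weight n p j) =
      (\<Sum>j\<le>n. 2 * (real (j choose 2) * binom_weight n p j)
        + (1 - 2 * real n * p) * (real (j choose 1) * binom_weight n p j)
        + (real n * p)^2 * binom_weight n p j)"
    unfolding sq by (intro sum.cong) (simp_all add: algebra_simps)
  also have "\<dots> = 2 * (\<Sum>j\<le>n. real (j choose 2) * binom_weight n p j)
      + (1 - 2 * real n * p) * (\<Sum>j\<le>n. real (j choose 1) * binom_weight n p j)
      + (real n * p)^2 * (\<Sum>j\<le>n. binom_weight n p j)"
    by (simp only: sum.distrib sum_distrib_left)
  also have "\<dots> = 2 * real (n choose 2) * p ^ 2 + (1 - 2 * real n * p) * (real (n choose 1) * p ^ 1)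
      + (real n * p)^2"
    unfolding binomial_factorial_moment sum_binomial_weights by simp
  also have "\<dots> = real n * p * (1 - p)"
    unfolding choose2 by (simp add: power2_eq_square algebra_simps)
  finally show ?thesis .
qed

lemma binomial_chebyshev:
  assumes "0 \<le> p" "p \<le> 1" "\<delta> > 0"
  shows "(\<Sum>j | j \<le> n \<and> \<delta> \<le> \<bar>real j - real n * p\<bar>. binom_weight n p j) \<le> real n * p / \<delta>^2"
proof -
  have w0: "binom_weight n p j \<ge> 0" for j using assms by simp
  have "(\<Sum>j | j \<le> n \<and> \<delta> \<le> \<bar>real j - real n * p\<bar>. binom_weight n p j)
     \<le> (\<Sum>j | j \<le> n \<and> \<delta> \<le> \<bar>real j - real n * p\<bar>. (real j - real n * p)^2 / \<delta>^2 * binom_weight n p j)"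
  proof (rule sum_mono)
    fix j assume "j \<in> {j. j \<le> n \<and> \<delta> \<le> \<bar>real j - real n * p\<bar>}"
    then have "\<delta>^2 \<le> (real j - real n * p)^2" using assms
      by (metis (mono_tags, lifting) mem_Collect_eq abs_le_square_iff abs_of_pos)
    then have "1 \<le> (real j - real n * p)^2 / \<delta>^2" using assms by simp
    then show "binom_weight n p j \<le> (real j - real n * p)^2 / \<delta>^2 * binom_weight n p j"
      using mult_right_mono[OF _ w0[of j]] by (metis mult_1)
  qed
  also have "\<dots> \<le> (\<Sum>j\<le>n. (real j - real n * p)^2 / \<delta>^2 * binom_weight n p j)"
    by (rule sum_mono2) (use w0 in auto)
  also have "\<dots> = real n * p * (1 - p) / \<delta>^2"
    using binomial_variance[of n p] by (simp add: sum_divide_distrib[symmetric])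
  also have "\<dots> \<le> real n * p / \<delta>^2"
    using assms by (intro divide_right_mono) (auto simp: mult_left_le)
  finally show ?thesis .
qed

text \<open>De-Poissonization: for an antitone \<open>P\<close>, the binomial mixture of \<open>P\<close> at \<open>p\<close> controls
  \<open>P k\<close> for \<open>k\<close> away from the mean \<open>n p\<close>, up to the Chebyshev error.\<close>

lemma antimono_le_binomial_mixture:
  fixes P :: "nat \<Rightarrow> real"
  assumes P: "antimono P" "\<And>j. P j \<ge> 0" and p: "0 \<le> p" "p \<le> 1" and k: "real k > real n * p"
  shows "P k * (1 - real n * p / (real k - real n * p)^2) \<le> (\<Sum>j\<le>n. binom_weight n p j * P j)"
proof -
  have w0: "binom_weight n p j \<ge> 0" for j using p by simp
  have "(\<Sum>j | j \<le> n \<and> k < j. binom_weight n p j) \<le>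
      (\<Sum>j | j \<le> n \<and> real k - real n * p \<le> \<bar>real j - real n * p\<bar>. binom_weight n p j)"
    by (rule sum_mono2) (use w0 in auto)
  also have "\<dots> \<le> real n * p / (real k - real n * p)^2"
    using k p by (intro binomial_chebyshev) auto
  finally have tail: "(\<Sum>j | j \<le> n \<and> k < j. binom_weight n p j) \<le> real n * p / (real k - real n * p)^2" .
  have "{..n} = {j. j \<le> n \<and> j \<le> k} \<union> {j. j \<le> n \<and> k < j}" by auto
  then have "(\<Sum>j\<le>n. binom_weight n p j) =
      (\<Sum>j | j \<le> n \<and> j \<le> k. binom_weight n p j) + (\<Sum>j | j \<le> n \<and> k < j. binom_weight n p j)"
    by (simp add: sum.union_disjoint[symmetric] disjoint_iff)
  then have head: "1 - real n * p / (real k - real n * p)^2 \<le> (\<Sum>j | j \<le> n \<and> j \<le> k. binom_weight n p j)"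
    using tail sum_binomial_weights[of n p] by simp
  have "P k * (1 - real n * p / (real k - real n * p)^2) \<le> (\<Sum>j | j \<le> n \<and> j \<le> k. binom_weight n p j * P k)"
    using mult_left_mono[OF head P(2)] by (simp add: sum_distrib_left mult.commute)
  also have "\<dots> \<le> (\<Sum>j | j \<le> n \<and> j \<le> k. binom_weight n p j * P j)"
    by (intro sum_mono mult_left_mono w0) (auto intro: antimonoD[OF P(1)])
  also have "\<dots> \<le> (\<Sum>j\<le>n. binom_weight n p j * P j)"
    by (rule sum_mono2) (use w0 P(2) in auto)
  finally show ?thesis .
qed

lemma binomial_mixture_le_antimono:
  fixes P :: "nat \<Rightarrow> real"
  assumes P: "antimono P" "\<And>j. P j \<ge> 0" "\<And>j. P j \<le> 1"
    and p: "0 \<le> p" "p \<le> 1" and k: "real k < real n * p"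
  shows "(\<Sum>j\<le>n. binom_weight n p j * P j) - real n * p / (real n * p - real k)^2 \<le> P k"
proof -
  have w0: "binom_weight n p j \<ge> 0" for j using p by simp
  have "(\<Sum>j | j \<le> n \<and> j < k. binom_weight n p j) \<le>
      (\<Sum>j | j \<le> n \<and> real n * p - real k \<le> \<bar>real j - real n * p\<bar>. binom_weight n p j)"
    by (rule sum_mono2) (use w0 in auto)
  also have "\<dots> \<le> real n * p / (real n * p - real k)^2"
    using k p by (intro binomial_chebyshev) auto
  finally have tail: "(\<Sum>j | j \<le> n \<and> j < k. binom_weight n p j) \<le> real n * p / (real n * p - real k)^2" .
  have "{..n} = {j. j \<le> n \<and> j < k} \<union> {j. j \<le> n \<and> \<not> j < k}" by auto
  then have split: "(\<Sum>j\<le>n. binom_weight n p j * P j) =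
      (\<Sum>j | j \<le> n \<and> j < k. binom_weight n p j * P j) + (\<Sum>j | j \<le> n \<and> \<not> j < k. binom_weight n p j * P j)"
    by (simp add: sum.union_disjoint[symmetric] disjoint_iff)
  have "(\<Sum>j | j \<le> n \<and> j < k. binom_weight n p j * P j) \<le> (\<Sum>j | j \<le> n \<and> j < k. binom_weight n p j)"
    by (intro sum_mono mult_right_le_one_le w0 P(2,3))
  moreover have "(\<Sum>j | j \<le> n \<and> \<not> j < k. binom_weight n p j * P j) \<le>
      (\<Sum>j | j \<le> n \<and> \<not> j < k. binom_weight n p j) * P k"
    unfolding sum_distrib_right by (intro sum_mono mult_left_mono w0) (auto intro: antimonoD[OF P(1)])
  moreover have "(\<Sum>j | j \<le> n \<and> \<not> j < k. binom_weight n p j) \<le> 1"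
    using sum_mono2[of "{..n}" "{j. j \<le> n \<and> \<not> j < k}" "binom_weight n p"] w0
      sum_binomial_weights[of n p] by auto
  ultimately show ?thesis
    using split tail P(2)[of k] mult_right_mono[of _ 1 "P k"] by fastforce
qed

section \<open>The binomial mixture for one degree sequence\<close>

lemma pair_count_nonneg: "real (a::nat) * (real a - 1) \<ge> 0"
  by (cases a) auto

locale rooted_degree_seq =
  fixes n :: nat and D :: "nat \<Rightarrow> nat" and u :: nat
  assumes degree_sum: "sum D {1..n} = n" and root: "u \<in> {1..n}"
begin

definition survival :: "nat \<Rightarrow> real" where
  "survival j = measure_pmf.prob (rfg n D) {f. six_length f u > j}"

lemma survival_nonneg: "survival j \<ge> 0"
  unfolding survival_def by simp

lemma survival_le_one: "survival j \<le> 1"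
  unfolding survival_def by simp

lemma antimono_survival: "antimono survival"
  unfolding survival_def by (intro antimonoI measure_pmf.finite_measure_mono) auto

definition mixture :: "real \<Rightarrow> real" where
  "mixture p = (\<Sum>j\<le>n. binom_weight n p j * survival j)"

lemma mixture_eq:
  assumes "0 \<le> p" "p < 1"
  shows "mixture p = (1 - p) ^ D u * (\<Prod>c\<in>{1..n} - {u}. deg_factor p (D c))"
proof -
  have "n = D u + (\<Sum>c\<in>{1..n} - {u}. D c)"
    using degree_sum sum.remove[of "{1..n}" u D] root by simp
  then have "(1 - p) ^ n = (1 - p) ^ D u * (\<Prod>c\<in>{1..n} - {u}. (1 - p) ^ D c)"
    by (metis power_add power_sum)
  moreover have "mixture p = (1 - p) ^ n * (\<Prod>c\<in>{1..n} - {u}. 1 + real (D c) * (p / (1 - p)))"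
    unfolding mixture_def survival_def
    using binomial_mixture_six_length[OF degree_sum root assms] by (simp add: ac_simps)
  ultimately show ?thesis by (simp add: deg_factor_def prod.distrib mult.assoc)
qed

lemma degree_le_Delta: "c \<in> {1..n} \<Longrightarrow> real (D c) \<le> real (Delta n D)"
  unfolding Delta_def by simp

lemma sum_pair_counts: "(\<Sum>c\<in>{1..n}. real (D c) * (real (D c) - 1)) = real n * sigma2 n D"
proof -
  have "(\<Sum>c\<in>{1..n}. real (D c) * (real (D c) - 1)) =
      (\<Sum>c\<in>{1..n}. real (D c ^ 2)) - (\<Sum>c\<in>{1..n}. real (D c))"
    by (simp add: sum_subtractf algebra_simps power2_eq_square)
  also have "\<dots> = real (moment 2 n D) - real n"
    unfolding moment_def of_nat_sum[symmetric] degree_sum ..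
  also have "\<dots> = real n * sigma2 n D"
    unfolding sigma2_def using root by (simp add: field_simps)
  finally show ?thesis .
qed

lemma sigma2_nonneg: "sigma2 n D \<ge> 0"
proof -
  have "real n * sigma2 n D \<ge> 0"
    unfolding sum_pair_counts[symmetric] by (intro sum_nonneg) (simp add: pair_count_nonneg)
  then show ?thesis using root by (simp add: zero_le_mult_iff)
qed

text \<open>The root \<open>u\<close> has no factor in the product, so its \<open>D u (D u - 1) \<le> \<Delta>\<^sup>2\<close> pairs are
  missing from \<open>n \<sigma>\<^sup>2\<close>.\<close>

definition root_free_pairs :: real where
  "root_free_pairs = (\<Sum>c\<in>{1..n} - {u}. real (D c) * (real (D c) - 1))"

lemma root_free_pairs_eq:
  "root_free_pairs = real n * sigma2 n D - real (D u) * (real (D u) - 1)"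
  unfolding root_free_pairs_def sum_pair_counts[symmetric]
  using sum.remove[of "{1..n}" u "\<lambda>c. real (D c) * (real (D c) - 1)"] root by simp

lemma root_free_pairs_le: "root_free_pairs \<le> real n * sigma2 n D"
  using root_free_pairs_eq pair_count_nonneg[of "D u"] by simp

lemma root_free_pairs_ge: "root_free_pairs \<ge> real n * sigma2 n D - real (Delta n D) ^ 2"
proof -
  have "real (D u) * (real (D u) - 1) \<le> real (Delta n D) * real (Delta n D)"
  proof (cases "D u = 0")
    case False
    then show ?thesis using degree_le_Delta[OF root] by (intro mult_mono) auto
  qed simp
  then show ?thesis using root_free_pairs_eq by (simp add: power2_eq_square)
qed

lemma prod_deg_factor_le:
  assumes p: "0 \<le> p" "p \<le> 1/2"
  shows "(\<Prod>c\<in>{1..n} - {u}. deg_factor p (D c)) \<le>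
         exp (- (p^2) * root_free_pairs / 2 + p^3 * real (Delta n D) * root_free_pairs / 3)"
proof -
  let ?C = "{1..n} - {u}"
  have "(\<Prod>c\<in>?C. deg_factor p (D c)) \<le>
      (\<Prod>c\<in>?C. exp (- real (D c) * (real (D c) - 1) * p^2 / 2 + real (D c) * (real (D c) - 1)^2 * p^3 / 3))"
    using p by (intro prod_mono conjI deg_factor_le_exp) (simp_all add: deg_factor_def)
  also have "\<dots> = exp (\<Sum>c\<in>?C. - real (D c) * (real (D c) - 1) * p^2 / 2
      + real (D c) * (real (D c) - 1)^2 * p^3 / 3)"
    by (simp add: exp_sum)
  also have "\<dots> = exp (- (p^2) * root_free_pairs / 2 +
      p^3 * (\<Sum>c\<in>?C. real (D c) * (real (D c) - 1)^2) / 3)"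
    unfolding root_free_pairs_def
    by (simp add: sum.distrib sum_distrib_left sum_divide_distrib[symmetric] algebra_simps)
  also have "\<dots> \<le> exp (- (p^2) * root_free_pairs / 2 + p^3 * real (Delta n D) * root_free_pairs / 3)"
  proof -
    have "real (D c) * (real (D c) - 1)^2 \<le> real (Delta n D) * (real (D c) * (real (D c) - 1))"
      if "c \<in> ?C" for c
      using degree_le_Delta[of c] that pair_count_nonneg[of "D c"]
        mult_right_mono[of "real (D c) - 1" "real (Delta n D)" "real (D c) * (real (D c) - 1)"]
      by (simp add: power2_eq_square mult_ac)
    then have "(\<Sum>c\<in>?C. real (D c) * (real (D c) - 1)^2) \<le> real (Delta n D) * root_free_pairs"
      unfolding root_free_pairs_def sum_distrib_left by (rule sum_mono)
    then show ?thesis using p by (simp add: mult.assoc mult_left_mono)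
  qed
  finally show ?thesis .
qed

lemma mixture_le:
  assumes p: "0 \<le> p" "p \<le> 1/2"
  shows "mixture p \<le> exp (- (p^2) * (real n * sigma2 n D) / 2 + p^2 * real (Delta n D)^2 / 2
                           + p^3 * real (Delta n D) * (real n * sigma2 n D) / 3)"
proof -
  have p1: "p < 1" using p by simp
  have "mixture p \<le> (\<Prod>c\<in>{1..n} - {u}. deg_factor p (D c))"
    unfolding mixture_eq[OF p(1) p1] using p
    by (intro mult_left_le_one_le prod_nonneg) (auto simp: deg_factor_def intro: power_le_one)
  also have "\<dots> \<le> exp (- (p^2) * root_free_pairs / 2 + p^3 * real (Delta n D) * root_free_pairs / 3)"
    by (rule prod_deg_factor_le[OF p])
  also have "\<dots> \<le> exp (- (p^2) * (real n * sigma2 n D) / 2 + p^2 * real (Delta n D)^2 / 2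
                       + p^3 * real (Delta n D) * (real n * sigma2 n D) / 3)"
  proof -
    have "p^2 * (real n * sigma2 n D - real (Delta n D)^2) \<le> p^2 * root_free_pairs"
      using root_free_pairs_ge by (intro mult_left_mono) auto
    moreover have "p^3 * real (Delta n D) * root_free_pairs \<le> p^3 * real (Delta n D) * (real n * sigma2 n D)"
      using root_free_pairs_le p by (intro mult_left_mono) auto
    ultimately show ?thesis by (simp add: algebra_simps)
  qed
  finally show ?thesis .
qed

lemma mixture_ge:
  assumes p: "0 \<le> p" "p \<le> 1/2"
  shows "(1 - p * real (Delta n D)) * exp (- (p^2) * (real n * sigma2 n D) / 2 - p^3 * (real n * sigma2 n D))
         \<le> mixture p"
proof -
  let ?C = "{1..n} - {u}"
  have p1: "p < 1" using p by simp
  have "exp (- (p^2) * (real n * sigma2 n D) / 2 - p^3 * (real n * sigma2 n D)) \<le>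
      exp (- (p^2) * root_free_pairs / 2 - p^3 * root_free_pairs)"
    using root_free_pairs_le p
    by (intro exp_mono diff_mono divide_right_mono) (auto intro: mult_left_mono)
  also have "- (p^2) * root_free_pairs / 2 - p^3 * root_free_pairs =
      (\<Sum>c\<in>?C. - real (D c) * (real (D c) - 1) * p^2 / 2 - real (D c) * (real (D c) - 1) * p^3)"
  proof -
    have "(\<Sum>c\<in>?C. - real (D c) * (real (D c) - 1) * p^2 / 2 - real (D c) * (real (D c) - 1) * p^3) =
        (\<Sum>c\<in>?C. (real (D c) * (real (D c) - 1)) * (- (p^2) / 2 - p^3))"
      by (rule sum.cong) (simp_all add: field_simps)
    also have "\<dots> = root_free_pairs * (- (p^2) / 2 - p^3)"
      unfolding root_free_pairs_def by (simp add: sum_distrib_right)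
    finally show ?thesis by (simp add: field_simps)
  qed
  also have "exp (\<Sum>c\<in>?C. - real (D c) * (real (D c) - 1) * p^2 / 2 - real (D c) * (real (D c) - 1) * p^3) =
      (\<Prod>c\<in>?C. exp (- real (D c) * (real (D c) - 1) * p^2 / 2 - real (D c) * (real (D c) - 1) * p^3))"
    by (simp add: exp_sum)
  also have "\<dots> \<le> (\<Prod>c\<in>?C. deg_factor p (D c))"
    by (intro prod_mono conjI exp_le_deg_factor p) simp
  finally have prod: "exp (- (p^2) * (real n * sigma2 n D) / 2 - p^3 * (real n * sigma2 n D)) \<le>
      (\<Prod>c\<in>?C. deg_factor p (D c))" .
  have "1 - p * real (Delta n D) \<le> 1 - p * real (D u)"
    using degree_le_Delta[OF root] p by (simp add: mult_left_mono)
  also have "\<dots> \<le> (1 - p) ^ D u"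
    using Bernoulli_inequality[of "- p" "D u"] p by (simp add: algebra_simps)
  finally have root_factor: "1 - p * real (Delta n D) \<le> (1 - p) ^ D u" .
  show ?thesis
    unfolding mixture_eq[OF p(1) p1]
    using prod root_factor p by (intro mult_mono) auto
qed

end

section \<open>Asymptotics\<close>

lemma tendsto_squeeze_param:
  fixes a :: "nat \<Rightarrow> real" and g :: "real \<Rightarrow> real"
  assumes cont: "isCont g c"
    and upper: "\<forall>\<^sub>F \<theta> in at_left c. \<exists>U. U \<longlonglongrightarrow> g \<theta> \<and> (\<forall>\<^sub>F n in sequentially. a n \<le> U n)"
    and lower: "\<forall>\<^sub>F \<theta> in at_right c. \<exists>L. L \<longlonglongrightarrow> g \<theta> \<and> (\<forall>\<^sub>F n in sequentially. L n \<le> a n)"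
  shows "a \<longlonglongrightarrow> g c"
proof (rule order_tendstoI)
  have lim: "(g \<longlongrightarrow> g c) (at_left c)" "(g \<longlongrightarrow> g c) (at_right c)"
    using cont unfolding isCont_def filterlim_at_split by auto
  fix y assume "y > g c"
  then have "\<forall>\<^sub>F \<theta> in at_left c. g \<theta> < y" using lim(1) order_tendstoD(2) by blast
  from eventually_happens'[OF _ eventually_conj[OF this upper]] obtain \<theta> U
    where U: "g \<theta> < y" "U \<longlonglongrightarrow> g \<theta>" "\<forall>\<^sub>F n in sequentially. a n \<le> U n"
    by auto
  from order_tendstoD(2)[OF U(2,1)] U(3) show "\<forall>\<^sub>F n in sequentially. a n < y"
    by eventually_elim simp
next
  have lim: "(g \<longlongrightarrow> g c) (at_left c)" "(g \<longlongrightarrow> g c) (at_right c)"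
    using cont unfolding isCont_def filterlim_at_split by auto
  fix y assume "y < g c"
  then have "\<forall>\<^sub>F \<theta> in at_right c. y < g \<theta>" using lim(2) order_tendstoD(1) by blast
  from eventually_happens'[OF _ eventually_conj[OF this lower]] obtain \<theta> L
    where L: "y < g \<theta>" "L \<longlonglongrightarrow> g \<theta>" "\<forall>\<^sub>F n in sequentially. L n \<le> a n"
    by auto
  from order_tendstoD(1)[OF L(2,1)] L(3) show "\<forall>\<^sub>F n in sequentially. y < a n"
    by eventually_elim simp
qed

lemma of_nat_gt_iff_gt_nat_floor:
  assumes "t \<ge> 0" shows "real s > t \<longleftrightarrow> s > nat \<lfloor>t\<rfloor>"
  using assms by (simp add: nat_less_iff floor_less_iff)

lemma filterlim_at_top_of_inverse:
  fixes f :: "nat \<Rightarrow> real"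
  assumes "(\<lambda>n. inverse (f n)) \<longlonglongrightarrow> 0" "\<forall>\<^sub>F n in sequentially. f n > 0"
  shows "filterlim f at_top sequentially"
  using filterlim_inverse_at_top[OF assms(1)] assms(2) by (simp add: eventually_mono)

locale rayleigh_regime =
  fixes d :: "nat \<Rightarrow> nat \<Rightarrow> nat" and v :: "nat \<Rightarrow> nat" and x :: real
  assumes deg: "\<And>n. n \<ge> 1 \<Longrightarrow> is_degree_seq n (d n)"
    and vert: "\<And>n. n \<ge> 1 \<Longrightarrow> v n \<in> {1..n}"
    and sig_o: "(\<lambda>n. sigma2 n (d n)) \<in> o(\<lambda>n. real n)"
    and sig_omega: "(\<lambda>n. 1 / real n) \<in> o(\<lambda>n. sigma2 n (d n))"
    and Delta_o: "(\<lambda>n. real (Delta n (d n))) \<in> o(\<lambda>n. sqrt (real n * sigma2 n (d n)))"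
    and x_pos: "x > 0"
begin

lemma rooted_degree_seq_at: "n \<ge> 1 \<Longrightarrow> rooted_degree_seq n (d n) (v n)"
  using deg vert by unfold_locales (auto simp: is_degree_seq_def)

definition threshold :: "nat \<Rightarrow> real" where
  "threshold n = x * sqrt (real n / sigma2 n (d n))"

definition tail :: "nat \<Rightarrow> real" where
  "tail n = measure_pmf.prob (rfg n (d n)) {f. real (six_length f (v n)) > threshold n}"

text \<open>The binomial parameter at which the mixture is evaluated; its mean \<open>n p\<close> is \<open>\<theta>\<close> times
  the threshold.\<close>

definition step_prob :: "real \<Rightarrow> nat \<Rightarrow> real" where
  "step_prob \<theta> n = \<theta> * x / sqrt (real n * sigma2 n (d n))"

lemma tail_eq_survival:
  assumes "n \<ge> 1"
  shows "tail n = rooted_degree_seq.survival n (d n) (v n) (nat \<lfloor>threshold n\<rfloor>)"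
proof -
  have "threshold n \<ge> 0"
    using rooted_degree_seq.sigma2_nonneg[OF rooted_degree_seq_at[OF assms]] x_pos
    by (simp add: threshold_def)
  then show ?thesis
    unfolding tail_def rooted_degree_seq.survival_def[OF rooted_degree_seq_at[OF assms]]
    by (simp add: of_nat_gt_iff_gt_nat_floor)
qed

lemma step_prob_scaling:
  assumes n: "n \<ge> 1" "sigma2 n (d n) > 0"
  shows "real n * step_prob \<theta> n = \<theta> * threshold n"
    and "step_prob \<theta> n ^ 2 * (real n * sigma2 n (d n)) = \<theta>^2 * x^2"
proof -
  have pos: "real n * sigma2 n (d n) > 0" using n by simp
  have "sqrt (real n / sigma2 n (d n)) * sqrt (real n * sigma2 n (d n)) = real n"
    using n by (simp add: real_sqrt_mult[symmetric])
  then have sq: "sqrt (real n / sigma2 n (d n)) = real n / sqrt (real n * sigma2 n (d n))"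
    using pos by (simp add: eq_divide_eq)
  show "real n * step_prob \<theta> n = \<theta> * threshold n"
    unfolding step_prob_def threshold_def sq by simp
  show "step_prob \<theta> n ^ 2 * (real n * sigma2 n (d n)) = \<theta>^2 * x^2"
    unfolding step_prob_def power_divide real_sqrt_pow2[OF less_imp_le[OF pos]]
    using pos by (auto simp: power_mult_distrib zero_less_mult_iff)
qed

lemma tail_le:
  assumes n: "n \<ge> 1" "sigma2 n (d n) > 0"
    and \<theta>: "0 < \<theta>" "step_prob \<theta> n \<le> 1/2" "inverse (threshold n) < 1 - \<theta>"
  shows "tail n * (1 - \<theta> * inverse (threshold n) / (1 - \<theta> - inverse (threshold n))^2) \<le>
         exp (- (\<theta>^2 * x^2) / 2 + (step_prob \<theta> n * real (Delta n (d n)))^2 / 2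
              + step_prob \<theta> n * real (Delta n (d n)) * (\<theta>^2 * x^2) / 3)"
proof -
  interpret rooted_degree_seq n "d n" "v n" by (rule rooted_degree_seq_at[OF n(1)])
  let ?t = "threshold n" and ?p = "step_prob \<theta> n" and ?\<Delta> = "real (Delta n (d n))"
  let ?k = "nat \<lfloor>?t\<rfloor>" and ?\<epsilon> = "1 - \<theta> - inverse (threshold n)"
  note scale = step_prob_scaling[OF n, of \<theta>]
  have t_pos: "?t > 0" using n x_pos by (simp add: threshold_def)
  have p_nonneg: "?p \<ge> 0" using \<theta> n x_pos by (simp add: step_prob_def)
  have "real ?k > ?t - 1" using t_pos by linarith
  then have gap: "real ?k - real n * ?p > ?t * ?\<epsilon>"
    using scale(1) t_pos by (simp add: algebra_simps)
  have gap_pos: "?t * ?\<epsilon> > 0" using t_pos \<theta> by simp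
  have "real n * ?p / (real ?k - real n * ?p)^2 \<le> real n * ?p / (?t * ?\<epsilon>)^2"
    using gap gap_pos p_nonneg by (intro divide_left_mono power_mono mult_pos_pos) auto
  also have "\<dots> = \<theta> * inverse ?t / ?\<epsilon>^2"
    unfolding scale(1) using t_pos by (simp add: power_mult_distrib power2_eq_square divide_inverse mult_ac)
  finally have err: "real n * ?p / (real ?k - real n * ?p)^2 \<le> \<theta> * inverse ?t / ?\<epsilon>^2" .
  have "tail n * (1 - \<theta> * inverse ?t / ?\<epsilon>^2) \<le> survival ?k * (1 - real n * ?p / (real ?k - real n * ?p)^2)"
    unfolding tail_eq_survival[OF n(1)] using err survival_nonneg by (intro mult_left_mono) auto
  also have "\<dots> \<le> mixture ?p"
    unfolding mixture_def using gap gap_pos p_nonneg \<theta>(2)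
    by (intro antimono_le_binomial_mixture[OF antimono_survival survival_nonneg]) simp_all
  also have "\<dots> \<le> exp (- (?p^2) * (real n * sigma2 n (d n)) / 2 + ?p^2 * ?\<Delta>^2 / 2
                      + ?p^3 * ?\<Delta> * (real n * sigma2 n (d n)) / 3)"
    using p_nonneg \<theta>(2) by (rule mixture_le)
  also have "\<dots> = exp (- (\<theta>^2 * x^2) / 2 + (?p * ?\<Delta>)^2 / 2 + ?p * ?\<Delta> * (\<theta>^2 * x^2) / 3)"
  proof -
    have "?p^3 * ?\<Delta> * (real n * sigma2 n (d n)) = ?p * ?\<Delta> * (?p^2 * (real n * sigma2 n (d n)))"
      by (simp add: power2_eq_square power3_eq_cube mult_ac)
    moreover have "?p^2 * ?\<Delta>^2 = (?p * ?\<Delta>)^2" by (simp add: power_mult_distrib)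
    ultimately show ?thesis unfolding mult_minus_left scale(2) by simp
  qed
  finally show ?thesis .
qed

lemma tail_ge:
  assumes n: "n \<ge> 1" "sigma2 n (d n) > 0"
    and \<theta>: "1 < \<theta>" "step_prob \<theta> n \<le> 1/2"
  shows "(1 - step_prob \<theta> n * real (Delta n (d n))) * exp (- (\<theta>^2 * x^2) / 2 - step_prob \<theta> n * (\<theta>^2 * x^2))
         - \<theta> * inverse (threshold n) / (\<theta> - 1)^2 \<le> tail n"
proof -
  interpret rooted_degree_seq n "d n" "v n" by (rule rooted_degree_seq_at[OF n(1)])
  let ?t = "threshold n" and ?p = "step_prob \<theta> n" and ?\<Delta> = "real (Delta n (d n))"
  let ?k = "nat \<lfloor>?t\<rfloor>"
  note scale = step_prob_scaling[OF n, of \<theta>]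
  have t_pos: "?t > 0" using n x_pos by (simp add: threshold_def)
  have p_nonneg: "?p \<ge> 0" using \<theta> n x_pos by (simp add: step_prob_def)
  have "real ?k \<le> ?t" using t_pos by linarith
  then have gap: "real n * ?p - real ?k \<ge> (\<theta> - 1) * ?t"
    using scale(1) by (simp add: algebra_simps)
  have gap_pos: "(\<theta> - 1) * ?t > 0" using t_pos \<theta> by simp
  have "real n * ?p / (real n * ?p - real ?k)^2 \<le> real n * ?p / ((\<theta> - 1) * ?t)^2"
    using gap gap_pos p_nonneg by (intro divide_left_mono power_mono mult_pos_pos) auto
  also have "\<dots> = \<theta> * inverse ?t / (\<theta> - 1)^2"
    unfolding scale(1) using t_pos by (simp add: power_mult_distrib power2_eq_square divide_inverse mult_ac)
  finally have err: "real n * ?p / (real n * ?p - real ?k)^2 \<le> \<theta> * inverse ?t / (\<theta> - 1)^2" .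
  have "(1 - ?p * ?\<Delta>) * exp (- (\<theta>^2 * x^2) / 2 - ?p * (\<theta>^2 * x^2)) =
      (1 - ?p * ?\<Delta>) * exp (- (?p^2) * (real n * sigma2 n (d n)) / 2 - ?p^3 * (real n * sigma2 n (d n)))"
  proof -
    have "?p^3 * (real n * sigma2 n (d n)) = ?p * (?p^2 * (real n * sigma2 n (d n)))"
      by (simp add: power2_eq_square power3_eq_cube mult_ac)
    then show ?thesis unfolding mult_minus_left scale(2) by simp
  qed
  also have "\<dots> \<le> mixture ?p"
    using p_nonneg \<theta>(2) by (rule mixture_ge)
  also have "mixture ?p - real n * ?p / (real n * ?p - real ?k)^2 \<le> survival ?k"
    unfolding mixture_def using gap gap_pos p_nonneg \<theta>(2)
    by (intro binomial_mixture_le_antimono[OF antimono_survival survival_nonneg survival_le_one])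
      simp_all
  finally show ?thesis
    unfolding tail_eq_survival[OF n(1)] using err by linarith
qed

end

context rayleigh_regime
begin

lemma eventually_regular: "\<forall>\<^sub>F n in sequentially. n \<ge> 1 \<and> sigma2 n (d n) > 0"
  using landau_o.smallD[OF sig_omega zero_less_one] eventually_ge_at_top[of 1]
proof eventually_elim
  case (elim n)
  then have "sigma2 n (d n) \<noteq> 0" by auto
  then show ?case using elim rooted_degree_seq.sigma2_nonneg[OF rooted_degree_seq_at] by force
qed

lemma threshold_at_top: "filterlim threshold at_top sequentially"
proof -
  have "(\<lambda>n. inverse (real n / sigma2 n (d n))) \<longlonglongrightarrow> 0"
    using smalloD_tendsto[OF sig_o] by simp
  moreover have "\<forall>\<^sub>F n in sequentially. real n / sigma2 n (d n) > 0"
    using eventually_regular by (rule eventually_mono) simp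
  ultimately have "filterlim (\<lambda>n. real n / sigma2 n (d n)) at_top sequentially"
    by (rule filterlim_at_top_of_inverse)
  then show ?thesis
    unfolding threshold_def
    by (intro filterlim_tendsto_pos_mult_at_top[OF tendsto_const x_pos] filterlim_compose[OF sqrt_at_top])
qed

lemma step_prob_tendsto_0: "step_prob \<theta> \<longlonglongrightarrow> 0"
proof -
  have "(\<lambda>n. inverse (real n * sigma2 n (d n))) \<longlonglongrightarrow> 0"
    using smalloD_tendsto[OF sig_omega] by (simp add: field_simps)
  moreover have "\<forall>\<^sub>F n in sequentially. real n * sigma2 n (d n) > 0"
    using eventually_regular by (rule eventually_mono) simp
  ultimately have "filterlim (\<lambda>n. real n * sigma2 n (d n)) at_top sequentially"
    by (rule filterlim_at_top_of_inverse)
  then have "filterlim (\<lambda>n. sqrt (real n * sigma2 n (d n))) at_infinity sequentially"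
    by (intro filterlim_at_top_imp_at_infinity filterlim_compose[OF sqrt_at_top])
  then show ?thesis
    unfolding step_prob_def by (rule tendsto_divide_0[OF tendsto_const])
qed

lemma step_prob_Delta_tendsto_0: "(\<lambda>n. step_prob \<theta> n * real (Delta n (d n))) \<longlonglongrightarrow> 0"
proof -
  have "(\<lambda>n. (\<theta> * x) * (real (Delta n (d n)) / sqrt (real n * sigma2 n (d n)))) \<longlonglongrightarrow> (\<theta> * x) * 0"
    using smalloD_tendsto[OF Delta_o] by (intro tendsto_mult tendsto_const)
  then show ?thesis by (simp add: step_prob_def)
qed

lemma tail_upper:
  assumes \<theta>: "0 < \<theta>" "\<theta> < 1"
  shows "\<exists>U. U \<longlonglongrightarrow> exp (- (\<theta>^2 * x^2) / 2) \<and> (\<forall>\<^sub>F n in sequentially. tail n \<le> U n)"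
proof -
  define r where "r n = \<theta> * inverse (threshold n) / (1 - \<theta> - inverse (threshold n))^2" for n
  define E where "E n = exp (- (\<theta>^2 * x^2) / 2 + (step_prob \<theta> n * real (Delta n (d n)))^2 / 2
      + step_prob \<theta> n * real (Delta n (d n)) * (\<theta>^2 * x^2) / 3)" for n
  have inv: "(\<lambda>n. inverse (threshold n)) \<longlonglongrightarrow> 0"
    by (rule tendsto_inverse_0_at_top[OF threshold_at_top])
  have "r \<longlonglongrightarrow> \<theta> * 0 / (1 - \<theta> - 0)^2"
    unfolding r_def by (intro tendsto_intros inv) (use \<theta> in simp)
  then have r: "r \<longlonglongrightarrow> 0" by simp
  have lim: "(\<lambda>n. E n / (1 - r n)) \<longlonglongrightarrow> exp (- (\<theta>^2 * x^2) / 2 + 0^2 / 2 + 0 * (\<theta>^2 * x^2) / 3) / (1 - 0)"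
    unfolding E_def by (intro tendsto_intros r step_prob_Delta_tendsto_0) simp_all
  have "\<forall>\<^sub>F n in sequentially. step_prob \<theta> n < 1/2"
    by (rule order_tendstoD(2)[OF step_prob_tendsto_0]) simp
  moreover have "\<forall>\<^sub>F n in sequentially. inverse (threshold n) < 1 - \<theta>"
    by (rule order_tendstoD(2)[OF inv]) (use \<theta> in simp)
  moreover have "\<forall>\<^sub>F n in sequentially. r n < 1"
    by (rule order_tendstoD(2)[OF r]) simp
  ultimately have "\<forall>\<^sub>F n in sequentially. tail n \<le> E n / (1 - r n)"
    using eventually_regular
  proof eventually_elim
    case (elim n)
    then have "tail n * (1 - r n) \<le> E n"
      unfolding r_def E_def using \<theta> by (intro tail_le) auto
    then show ?case using elim(3) by (simp add: pos_le_divide_eq)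
  qed
  with lim show ?thesis by auto
qed

lemma tail_lower:
  assumes \<theta>: "1 < \<theta>"
  shows "\<exists>L. L \<longlonglongrightarrow> exp (- (\<theta>^2 * x^2) / 2) \<and> (\<forall>\<^sub>F n in sequentially. L n \<le> tail n)"
proof -
  define L where "L n = (1 - step_prob \<theta> n * real (Delta n (d n)))
      * exp (- (\<theta>^2 * x^2) / 2 - step_prob \<theta> n * (\<theta>^2 * x^2)) - \<theta> * inverse (threshold n) / (\<theta> - 1)^2"
    for n
  have "L \<longlonglongrightarrow> (1 - 0) * exp (- (\<theta>^2 * x^2) / 2 - 0 * (\<theta>^2 * x^2)) - \<theta> * 0 / (\<theta> - 1)^2"
    unfolding L_def
    by (intro tendsto_intros step_prob_Delta_tendsto_0 step_prob_tendsto_0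
        tendsto_inverse_0_at_top[OF threshold_at_top]) (use \<theta> in simp)
  moreover have "\<forall>\<^sub>F n in sequentially. step_prob \<theta> n < 1/2"
    by (rule order_tendstoD(2)[OF step_prob_tendsto_0]) simp
  then have "\<forall>\<^sub>F n in sequentially. L n \<le> tail n"
    using eventually_regular
  proof eventually_elim
    case (elim n)
    then show ?case unfolding L_def using \<theta> by (intro tail_ge) auto
  qed
  ultimately show ?thesis by auto
qed

lemma tail_tendsto: "tail \<longlonglongrightarrow> exp (- (x^2) / 2)"
proof -
  have "tail \<longlonglongrightarrow> (\<lambda>\<theta>. exp (- (\<theta>^2 * x^2) / 2)) 1"
  proof (rule tendsto_squeeze_param[where g = "\<lambda>\<theta>. exp (- (\<theta>^2 * x^2) / 2)" and c = 1])
    show "isCont (\<lambda>\<theta>. exp (- (\<theta>^2 * x^2) / 2)) 1" by (auto intro!: continuous_intros)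
    have "\<forall>\<^sub>F \<theta> in at_left 1. \<theta> \<in> {0<..<1::real}" by (rule eventually_at_left_real) simp
    then show "\<forall>\<^sub>F \<theta> in at_left 1.
        \<exists>U. U \<longlonglongrightarrow> exp (- (\<theta>^2 * x^2) / 2) \<and> (\<forall>\<^sub>F n in sequentially. tail n \<le> U n)"
      by eventually_elim (rule tail_upper; simp)
    show "\<forall>\<^sub>F \<theta> in at_right 1.
        \<exists>L. L \<longlonglongrightarrow> exp (- (\<theta>^2 * x^2) / 2) \<and> (\<forall>\<^sub>F n in sequentially. L n \<le> tail n)"
      using eventually_at_right_less[of "1::real"] by eventually_elim (rule tail_lower)
  qed
  then show ?thesis by simp
qed

end

theorem theorem2p1:
  fixes d :: "nat \<Rightarrow> nat \<Rightarrow> nat" and v :: "nat \<Rightarrow> nat"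
  assumes deg: "\<And>n. n \<ge> 1 \<Longrightarrow> is_degree_seq n (d n)"
    and vert: "\<And>n. n \<ge> 1 \<Longrightarrow> v n \<in> {1..n}"
    and sig_o: "(\<lambda>n. sigma2 n (d n)) \<in> o(\<lambda>n. real n)"
    and sig_omega: "(\<lambda>n. 1 / real n) \<in> o(\<lambda>n. sigma2 n (d n))"
    and Delta_o: "(\<lambda>n. real (Delta n (d n))) \<in> o(\<lambda>n. sqrt (real n * sigma2 n (d n)))"
  shows "\<forall>x::real > 0.
     (\<lambda>n. measure_pmf.prob (rfg n (d n))
        {f. real (six_length f (v n)) > x * sqrt (real n / sigma2 n (d n))})
     \<longlonglongrightarrow> exp (- (x\<^sup>2) / 2)"
proof (intro allI impI)
  fix x :: real assume "x > 0"
  then interpret rayleigh_regime d v x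
    by (intro rayleigh_regime.intro deg vert sig_o sig_omega Delta_o)
  show "(\<lambda>n. measure_pmf.prob (rfg n (d n))
        {f. real (six_length f (v n)) > x * sqrt (real n / sigma2 n (d n))}) \<longlonglongrightarrow> exp (- (x\<^sup>2) / 2)"
    using tail_tendsto unfolding tail_def threshold_def .
qed

end
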